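(* For every $A\subseteq[n]$ one has (i) $[\Gamma_A,\underline{D}]=[\Gamma_A,\underline{x}]=0$, and (ii) $[\Gamma_A,\Gamma_{[n]}]=0$, as operators on $\mathcal{P}(\mathbb{R}^n)\otimes V$.
   Context: Fix $n\ge1$ and real parameters $\mu_1,\dots,\mu_n>0$; write $[n]=\{1,\dots,n\}$. For $i\in[n]$, $r_i$ is the reflection $(r_if)(x)=f(x_1,\dots,-x_i,\dots,x_n)$ and $T_i=\partial_{x_i}+\frac{\mu_i}{x_i}(1-r_i)$. $\mathcal{C}\ell_n$ is generated by $e_1,\dots,e_n$ with $e_ie_j+e_je_i=-2\delta_{ij}$, $V$ is a fixed left $\mathcal{C}\ell_n$-module, and operators act on $\mathcal{P}(\mathbb{R}^n)\otimes V$ with $x_i,T_i,r_i$ acting on the polynomial factor and $e_i$ on $V$. For $A\subseteq[n]$: $\underline{D}_A=\sum_{i\in A}e_iT_i$, $\underline{x}_A=\sum_{i\in A}e_ix_i$, $\underline{S}_A=\frac12([\underline{x}_A,\underline{D}_A]-1)$, $\Gamma_A=\underline{S}_A\prod_{i\in A}r_i$ (empty sums $0$, empty products $1$); $\underline{D}=\underline{D}_{[n]}$, $\underline{x}=\underline{x}_{[n]}$. *)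

theory Defs
  imports Complex_Main "HOL-Library.Function_Algebras"
begin

text \<open>
  Elements of P(R^n) (x) V are represented by their coefficient functions:
  F :: (nat => nat) => 'v, where F alpha is the V-coefficient of the monomial
  x^alpha = prod_i x_i^(alpha i).  Variables are indexed by 1..n.
\<close>

type_synonym 'v pv = "(nat \<Rightarrow> nat) \<Rightarrow> 'v"
type_synonym 'v pvop = "'v pv \<Rightarrow> 'v pv"

definition is_pv :: "nat \<Rightarrow> ('v::zero) pv \<Rightarrow> bool" where
  "is_pv n F \<longleftrightarrow> finite {a. F a \<noteq> 0} \<and>
     (\<forall>a. F a \<noteq> 0 \<longrightarrow> (\<forall>i. a i \<noteq> 0 \<longrightarrow> i \<in> {1..n}))"

text \<open>multiplication by x_i\<close>
definition mulx :: "nat \<Rightarrow> ('v::zero) pvop" where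
  "mulx i F = (\<lambda>a. if a i > 0 then F (a(i := a i - 1)) else 0)"

text \<open>reflection r_i: (r_i f)(x) = f(x_1,..,-x_i,..,x_n)\<close>
definition refl :: "nat \<Rightarrow> ('v::real_vector) pvop" where
  "refl i F = (\<lambda>a. ((-1::real) ^ a i) *\<^sub>R F a)"

text \<open>product of the reflections r_i, i in A (they commute)\<close>
definition reflA :: "nat set \<Rightarrow> ('v::real_vector) pvop" where
  "reflA A F = (\<lambda>a. ((-1::real) ^ (\<Sum>i\<in>A. a i)) *\<^sub>R F a)"

text \<open>partial derivative d/dx_i\<close>
definition pd :: "nat \<Rightarrow> ('v::real_vector) pvop" where
  "pd i F = (\<lambda>a. real (a i + 1) *\<^sub>R F (a(i := a i + 1)))"

text \<open>divided difference (1 - r_i)/x_i (well defined on polynomials)\<close>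
definition divdiff :: "nat \<Rightarrow> ('v::real_vector) pvop" where
  "divdiff i F = (\<lambda>a. (1 - (-1::real) ^ (a i + 1)) *\<^sub>R F (a(i := a i + 1)))"

definition dunkl :: "(nat \<Rightarrow> real) \<Rightarrow> nat \<Rightarrow> ('v::real_vector) pvop" where
  "dunkl mu i F = (\<lambda>a. pd i F a + mu i *\<^sub>R divdiff i F a)"

definition cl :: "(nat \<Rightarrow> 'v \<Rightarrow> 'v) \<Rightarrow> nat \<Rightarrow> 'v pvop" where
  "cl e i F = (\<lambda>a. e i (F a))"

definition DA :: "(nat \<Rightarrow> 'v \<Rightarrow> 'v) \<Rightarrow> (nat \<Rightarrow> real) \<Rightarrow> nat set \<Rightarrow> ('v::real_vector) pvop" where
  "DA e mu A F = (\<lambda>a. \<Sum>i\<in>A. cl e i (dunkl mu i F) a)"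

definition XA :: "(nat \<Rightarrow> 'v \<Rightarrow> 'v) \<Rightarrow> nat set \<Rightarrow> ('v::real_vector) pvop" where
  "XA e A F = (\<lambda>a. \<Sum>i\<in>A. cl e i (mulx i F) a)"

definition commut :: "('v::ab_group_add) pvop \<Rightarrow> 'v pvop \<Rightarrow> 'v pvop" where
  "commut P Q F = (\<lambda>a. P (Q F) a - Q (P F) a)"

definition SA :: "(nat \<Rightarrow> 'v \<Rightarrow> 'v) \<Rightarrow> (nat \<Rightarrow> real) \<Rightarrow> nat set \<Rightarrow> ('v::real_vector) pvop" where
  "SA e mu A F = (\<lambda>a. (1/2::real) *\<^sub>R (commut (XA e A) (DA e mu A) F a - F a))"

definition GammaA :: "(nat \<Rightarrow> 'v \<Rightarrow> 'v) \<Rightarrow> (nat \<Rightarrow> real) \<Rightarrow> nat set \<Rightarrow> ('v::real_vector) pvop" where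
  "GammaA e mu A F = SA e mu A (reflA A F)"

definition clifford_module :: "nat \<Rightarrow> (nat \<Rightarrow> 'v::real_vector \<Rightarrow> 'v) \<Rightarrow> bool" where
  "clifford_module n e \<longleftrightarrow> (\<forall>i\<in>{1..n}. linear (e i)) \<and>
     (\<forall>i\<in>{1..n}. \<forall>j\<in>{1..n}. \<forall>v. e i (e j v) + e j (e i v) =
        (if i = j then - 2 *\<^sub>R v else 0))"

end

theory Submission
  imports Defs
begin

text \<open>
  Write D_A = sum of e_i T_i and x_A = sum of e_i x_i over i in A.  The T_i commute and the
  e_i anticommute, so D_A^2 = -sum T_i^2 and x_A^2 = -sum x_i^2; with the one-variable relations
  [T_i^2, x_i] = 2 T_i and [T_i, x_i^2] = 2 x_i this gives [x_A, D_A^2] = 2 D_A and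
  [D_A, x_A^2] = -2 x_A, which say exactly that S_A anticommutes with D_A and x_A.  The product
  of the reflections r_i, i in A, anticommutes with them as well, so Gamma_A commutes with D_A
  and x_A.  For the complement B of A, D_B and x_B anticommute with D_A and x_A, hence commute
  with S_A, and they commute with the reflections; this gives (i).  Finally Gamma_[n] is built
  from D, x and the product of all r_i, each of which commutes with Gamma_A.
\<close>

text \<open>In the variable x_i, T_i maps x_i^(m+1) to dunkl_coeff mu i m times x_i^m.\<close>

definition dunkl_coeff :: "(nat \<Rightarrow> real) \<Rightarrow> nat \<Rightarrow> nat \<Rightarrow> real" where
  "dunkl_coeff mu i m = real (m + 1) + mu i * (1 - (-1) ^ (m + 1))"

lemma dunkl_shift: "dunkl mu i F = (\<lambda>a. dunkl_coeff mu i (a i) *\<^sub>R F (a(i := a i + 1)))"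
  by (simp add: dunkl_def pd_def divdiff_def dunkl_coeff_def fun_eq_iff algebra_simps)

lemma dunkl_coeff_add_two: "dunkl_coeff mu i (m + 2) = dunkl_coeff mu i m + 2"
  by (simp add: dunkl_coeff_def)

definition pv_scale :: "real \<Rightarrow> ('v::real_vector) pv \<Rightarrow> 'v pv" where
  "pv_scale c F = (\<lambda>a. c *\<^sub>R F a)"

lemma mulx_commute: "mulx i (mulx j F) = mulx j (mulx i F)"
  by (cases "i = j") (auto simp: mulx_def fun_eq_iff fun_upd_twist)

lemma dunkl_commute: "dunkl mu i (dunkl mu j F) = dunkl mu j (dunkl mu i F)"
  by (cases "i = j") (auto simp: dunkl_shift fun_eq_iff fun_upd_twist)

lemma dunkl_mulx_commute: "i \<noteq> j \<Longrightarrow> dunkl mu i (mulx j F) = mulx j (dunkl mu i F)"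
  by (auto simp: dunkl_shift mulx_def fun_eq_iff fun_upd_twist)

lemma dunkl_sq_mulx_commutator:
  "dunkl mu k (dunkl mu k (mulx i F)) - mulx i (dunkl mu k (dunkl mu k F))
     = (if i = k then pv_scale 2 (dunkl mu k F) else 0)"
proof (cases "i = k")
  case False
  then show ?thesis by (simp add: dunkl_mulx_commute)
next
  case True
  show ?thesis
  proof (rule ext)
    fix a
    show "(dunkl mu k (dunkl mu k (mulx i F)) - mulx i (dunkl mu k (dunkl mu k F))) a
        = (if i = k then pv_scale 2 (dunkl mu k F) else 0) a"
    proof (cases "a k")
      case 0
      then show ?thesis using True
        by (simp add: dunkl_shift mulx_def pv_scale_def dunkl_coeff_def)
    next
      case (Suc m)
      then show ?thesis using True dunkl_coeff_add_two[of mu k m]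
        by (simp add: dunkl_shift mulx_def pv_scale_def algebra_simps flip: scaleR_diff_left)
    qed
  qed
qed

lemma mulx_sq_dunkl_commutator:
  "mulx k (mulx k (dunkl mu i F)) - dunkl mu i (mulx k (mulx k F))
     = (if i = k then pv_scale (-2) (mulx k F) else 0)"
proof (cases "i = k")
  case False
  then show ?thesis by (simp add: dunkl_mulx_commute)
next
  case True
  show ?thesis
  proof (rule ext)
    fix a
    show "(mulx k (mulx k (dunkl mu i F)) - dunkl mu i (mulx k (mulx k F))) a
        = (if i = k then pv_scale (-2) (mulx k F) else 0) a"
    proof (cases "a k")
      case 0
      then show ?thesis using True by (simp add: dunkl_shift mulx_def pv_scale_def)
    next
      case (Suc m)
      show ?thesis
      proof (cases m)
        case 0
        then show ?thesis using True Suc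
          by (simp add: dunkl_shift mulx_def pv_scale_def dunkl_coeff_def)
      next
        case (Suc l)
        then show ?thesis using True \<open>a k = Suc m\<close> dunkl_coeff_add_two[of mu k l]
          by (simp add: dunkl_shift mulx_def pv_scale_def algebra_simps flip: scaleR_diff_left)
      qed
    qed
  qed
qed

lemma sum_fun_upd:
  "finite S \<Longrightarrow> (\<Sum>i\<in>S. if i = j then m else a i)
     = (if j \<in> S then m + (\<Sum>i\<in>S - {j}. a i) else sum a S)"
  by (auto simp: sum.remove intro: sum.cong)

lemma reflA_mulx:
  "finite S \<Longrightarrow> reflA S (mulx j F) = (if j \<in> S then - mulx j (reflA S F) else mulx j (reflA S F))"
  by (auto simp: reflA_def mulx_def fun_eq_iff gr0_conv_Suc sum_fun_upd sum.remove[of S j])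

lemma reflA_dunkl:
  "finite S \<Longrightarrow>
    reflA S (dunkl mu j F) = (if j \<in> S then - dunkl mu j (reflA S F) else dunkl mu j (reflA S F))"
  by (auto simp: reflA_def dunkl_shift fun_eq_iff sum_fun_upd sum.remove[of S j])

lemma reflA_commute: "reflA S (reflA S' F) = reflA S' (reflA S F)"
  by (simp add: reflA_def fun_eq_iff)

lemma sum_fun_apply: "(sum f S) a = (\<Sum>i\<in>S. f i a)"
  by (induct S rule: infinite_finite_induct) auto

definition pv_linear :: "('v::real_vector) pvop \<Rightarrow> bool" where
  "pv_linear P \<longleftrightarrow> (\<forall>F G. P (F + G) = P F + P G) \<and> (\<forall>c F. P (pv_scale c F) = pv_scale c (P F))"

lemma pv_linear_add: "pv_linear P \<Longrightarrow> P (F + G) = P F + P G"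
  by (simp add: pv_linear_def)

lemma pv_linear_scale: "pv_linear P \<Longrightarrow> P (pv_scale c F) = pv_scale c (P F)"
  by (simp add: pv_linear_def)

lemma pv_linear_zero: "pv_linear P \<Longrightarrow> P 0 = 0"
  using pv_linear_add[of P 0 0] by simp

lemma pv_linear_neg: "pv_linear P \<Longrightarrow> P (- F) = - P F"
  using pv_linear_add[of P F "- F"] pv_linear_zero[of P] by (simp add: eq_neg_iff_add_eq_0 add.commute)

lemma pv_linear_diff: "pv_linear P \<Longrightarrow> P (F - G) = P F - P G"
  using pv_linear_add[of P F "- G"] pv_linear_neg[of P G] by simp

lemma pv_linear_sum: "pv_linear P \<Longrightarrow> P (\<Sum>k\<in>S. f k) = (\<Sum>k\<in>S. P (f k))"
  by (induct S rule: infinite_finite_induct) (auto simp: pv_linear_zero pv_linear_add)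

lemma pv_linear_compose: "pv_linear P \<Longrightarrow> pv_linear Q \<Longrightarrow> pv_linear (\<lambda>F. P (Q F))"
  by (simp add: pv_linear_def)

lemma pv_linear_sum_op: "(\<And>i. i \<in> S \<Longrightarrow> pv_linear (P i)) \<Longrightarrow> pv_linear (\<lambda>F. \<Sum>i\<in>S. P i F)"
  by (auto simp: pv_linear_def sum.distrib pv_scale_def fun_eq_iff sum_fun_apply scaleR_sum_right)

lemma pv_linear_mulx: "pv_linear (mulx i)"
  by (auto simp: pv_linear_def mulx_def pv_scale_def fun_eq_iff)

lemma pv_linear_dunkl: "pv_linear (dunkl mu i)"
  by (auto simp: pv_linear_def dunkl_shift pv_scale_def fun_eq_iff algebra_simps)

lemma pv_linear_reflA: "pv_linear (reflA S)"
  by (auto simp: pv_linear_def reflA_def pv_scale_def fun_eq_iff algebra_simps)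

lemma pv_linear_cl: "linear (e i) \<Longrightarrow> pv_linear (cl e i)"
  by (auto simp: pv_linear_def cl_def pv_scale_def fun_eq_iff linear_add linear_scale)

lemma mulx_cl: "linear (e i) \<Longrightarrow> mulx j (cl e i F) = cl e i (mulx j F)"
  by (auto simp: mulx_def cl_def fun_eq_iff linear_0)

lemma dunkl_cl: "linear (e i) \<Longrightarrow> dunkl mu j (cl e i F) = cl e i (dunkl mu j F)"
  by (auto simp: dunkl_shift cl_def fun_eq_iff linear_scale)

lemma reflA_cl: "linear (e i) \<Longrightarrow> reflA S (cl e i F) = cl e i (reflA S F)"
  by (auto simp: reflA_def cl_def fun_eq_iff linear_scale)

definition half_commutator :: "('v::real_vector) pvop \<Rightarrow> 'v pvop \<Rightarrow> 'v pvop" where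
  "half_commutator X D F = pv_scale (1/2) (X (D F) - D (X F) - F)"

lemma SA_eq_half_commutator: "SA e mu S = half_commutator (XA e S) (DA e mu S)"
  by (simp add: SA_def half_commutator_def commut_def pv_scale_def fun_eq_iff)

lemma pv_linear_half_commutator:
  assumes X: "pv_linear X" and D: "pv_linear D"
  shows "pv_linear (half_commutator X D)"
  unfolding pv_linear_def half_commutator_def
  by (simp add: pv_linear_add[OF X] pv_linear_add[OF D] pv_linear_scale[OF X] pv_linear_scale[OF D])
     (simp add: fun_eq_iff pv_scale_def algebra_simps)

lemma half_commutator_anticommute_right:
  assumes D: "pv_linear D" and "X (D (D F)) - D (D (X F)) = pv_scale 2 (D F)"
  shows "half_commutator X D (D F) = - D (half_commutator X D F)"
proof -
  have "X (D (D F)) = D (D (X F)) + pv_scale 2 (D F)"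
    using assms(2) by (simp add: diff_eq_eq add.commute)
  then show ?thesis
    by (simp add: half_commutator_def pv_linear_scale[OF D] pv_linear_diff[OF D])
       (simp add: fun_eq_iff pv_scale_def algebra_simps, simp flip: scaleR_add_left)
qed

lemma half_commutator_anticommute_left:
  assumes X: "pv_linear X" and "D (X (X F)) - X (X (D F)) = pv_scale (-2) (X F)"
  shows "half_commutator X D (X F) = - X (half_commutator X D F)"
proof -
  have "D (X (X F)) = X (X (D F)) + pv_scale (-2) (X F)"
    using assms(2) by (simp add: diff_eq_eq add.commute)
  then show ?thesis
    by (simp add: half_commutator_def pv_linear_scale[OF X] pv_linear_diff[OF X])
       (simp add: fun_eq_iff pv_scale_def algebra_simps, simp flip: scaleR_add_left)
qed

lemma half_commutator_commute:
  assumes Q: "pv_linear Q" and "\<And>G. Q (X G) = X (Q G)" and "\<And>G. Q (D G) = D (Q G)"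
  shows "Q (half_commutator X D F) = half_commutator X D (Q F)"
  by (simp add: half_commutator_def pv_linear_scale[OF Q] pv_linear_diff[OF Q] assms(2,3))

lemma half_commutator_commute_of_anticommute:
  assumes Q: "pv_linear Q" and X: "pv_linear X" and D: "pv_linear D"
    and "\<And>G. Q (X G) = - X (Q G)" and "\<And>G. Q (D G) = - D (Q G)"
  shows "Q (half_commutator X D F) = half_commutator X D (Q F)"
  by (simp add: half_commutator_def pv_linear_scale[OF Q] pv_linear_diff[OF Q] assms(4,5)
      pv_linear_neg[OF X] pv_linear_neg[OF D])

definition clifford_sum ::
    "(nat \<Rightarrow> 'v \<Rightarrow> 'v) \<Rightarrow> nat set \<Rightarrow> (nat \<Rightarrow> ('v::real_vector) pvop) \<Rightarrow> 'v pvop" where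
  "clifford_sum e S P F = (\<lambda>a. \<Sum>i\<in>S. e i (P i F a))"

lemma DA_eq_clifford_sum: "DA e mu S = clifford_sum e S (dunkl mu)"
  by (simp add: DA_def cl_def clifford_sum_def fun_eq_iff)

lemma XA_eq_clifford_sum: "XA e S = clifford_sum e S mulx"
  by (simp add: XA_def cl_def clifford_sum_def fun_eq_iff)

lemma clifford_sum_split:
  "finite T \<Longrightarrow> A \<subseteq> T \<Longrightarrow>
    clifford_sum e T P F = clifford_sum e A P F + clifford_sum e (T - A) P F"
  by (simp add: clifford_sum_def fun_eq_iff sum.subset_diff[of A T] add.commute)

lemma DA_split: "finite T \<Longrightarrow> A \<subseteq> T \<Longrightarrow> DA e mu T F = DA e mu A F + DA e mu (T - A) F"
  unfolding DA_eq_clifford_sum by (rule clifford_sum_split)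

lemma XA_split: "finite T \<Longrightarrow> A \<subseteq> T \<Longrightarrow> XA e T F = XA e A F + XA e (T - A) F"
  unfolding XA_eq_clifford_sum by (rule clifford_sum_split)

locale clifford =
  fixes n :: nat and e :: "nat \<Rightarrow> 'v::real_vector \<Rightarrow> 'v"
  assumes clifford_module: "clifford_module n e"
begin

lemma linear_e: "i \<in> {1..n} \<Longrightarrow> linear (e i)"
  using clifford_module by (simp add: clifford_module_def)

lemma e_anticommute:
  "i \<in> {1..n} \<Longrightarrow> j \<in> {1..n} \<Longrightarrow> e i (e j v) + e j (e i v) = (if i = j then - 2 *\<^sub>R v else 0)"
  using clifford_module unfolding clifford_module_def by blast

lemma e_sum: "i \<in> {1..n} \<Longrightarrow> e i (\<Sum>j\<in>S. f j) = (\<Sum>j\<in>S. e i (f j))"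
  by (rule linear_sum[OF linear_e])

lemma clifford_double_sum_symmetric:
  assumes S: "S \<subseteq> {1..n}" and sym: "\<And>k j. k \<in> S \<Longrightarrow> j \<in> S \<Longrightarrow> v k j = v j k"
  shows "(\<Sum>k\<in>S. \<Sum>j\<in>S. e k (e j (v k j))) = - (\<Sum>k\<in>S. v k k)"
proof -
  have fin: "finite S" using S finite_subset by blast
  define w where "w = (\<Sum>k\<in>S. \<Sum>j\<in>S. e k (e j (v k j)))"
  have swap: "w = (\<Sum>k\<in>S. \<Sum>j\<in>S. e j (e k (v k j)))"
    unfolding w_def by (subst sum.swap) (intro sum.cong refl, simp add: sym)
  have "w + w = (\<Sum>k\<in>S. \<Sum>j\<in>S. e k (e j (v k j)) + e j (e k (v k j)))"
    by (subst (2) swap) (simp add: w_def sum.distrib)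
  also have "\<dots> = (\<Sum>k\<in>S. \<Sum>j\<in>S. if k = j then - 2 *\<^sub>R v k j else 0)"
    using S by (intro sum.cong refl e_anticommute) auto
  also have "\<dots> = (- 2) *\<^sub>R (\<Sum>k\<in>S. v k k)"
    using fin by (simp add: scaleR_sum_right)
  finally have "w + w = (- 2) *\<^sub>R (\<Sum>k\<in>S. v k k)" .
  then show ?thesis
    unfolding w_def[symmetric] by (simp flip: scaleR_2 scaleR_minus_right)
qed

lemma clifford_double_sum_disjoint:
  assumes S: "S \<subseteq> {1..n}" and B: "B \<subseteq> {1..n}" and disj: "S \<inter> B = {}"
  shows "(\<Sum>i\<in>S. \<Sum>k\<in>B. e i (e k (v i k))) = - (\<Sum>k\<in>B. \<Sum>i\<in>S. e k (e i (v i k)))"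
proof -
  have "e k (e i (v i k)) = - e i (e k (v i k))" if "i \<in> S" "k \<in> B" for i k
  proof -
    have "i \<noteq> k" "i \<in> {1..n}" "k \<in> {1..n}" using that S B disj by auto
    then show ?thesis using e_anticommute[of i k "v i k"] by (simp add: eq_neg_iff_add_eq_0 add.commute)
  qed
  then show ?thesis
    by (subst sum.swap) (simp add: sum_negf)
qed

text \<open>Operators acting on the polynomial factor only.\<close>

definition scalar_op :: "'v pvop \<Rightarrow> bool" where
  "scalar_op Q \<longleftrightarrow> pv_linear Q \<and> (\<forall>j\<in>{1..n}. \<forall>G. Q (cl e j G) = cl e j (Q G))"

lemma scalar_op_compose: "scalar_op P \<Longrightarrow> scalar_op Q \<Longrightarrow> scalar_op (\<lambda>G. P (Q G))"
  by (simp add: scalar_op_def pv_linear_compose)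

lemma scalar_op_mulx: "scalar_op (mulx i)"
  by (simp add: scalar_op_def pv_linear_mulx mulx_cl linear_e)

lemma scalar_op_dunkl: "scalar_op (dunkl mu i)"
  by (simp add: scalar_op_def pv_linear_dunkl dunkl_cl linear_e)

lemma scalar_op_reflA: "scalar_op (reflA A)"
  by (simp add: scalar_op_def pv_linear_reflA reflA_cl linear_e)

lemma clifford_sum_eq_sum: "clifford_sum e S P F = (\<Sum>i\<in>S. cl e i (P i F))"
  by (simp add: clifford_sum_def cl_def fun_eq_iff sum_fun_apply)

lemma clifford_sum_push:
  assumes S: "S \<subseteq> {1..n}" and Q: "scalar_op Q"
  shows "Q (clifford_sum e S P F) = clifford_sum e S (\<lambda>i G. Q (P i G)) F"
proof -
  have "Q (clifford_sum e S P F) = (\<Sum>i\<in>S. Q (cl e i (P i F)))"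
    using Q by (simp add: clifford_sum_eq_sum scalar_op_def pv_linear_sum)
  also have "\<dots> = clifford_sum e S (\<lambda>i G. Q (P i G)) F"
    using S Q by (simp add: clifford_sum_eq_sum scalar_op_def subset_iff)
  finally show ?thesis .
qed

lemma pv_linear_clifford_sum:
  assumes S: "S \<subseteq> {1..n}" and P: "\<And>i. pv_linear (P i)"
  shows "pv_linear (clifford_sum e S P)"
proof -
  have "pv_linear (\<lambda>F. cl e i (P i F))" if "i \<in> S" for i
    using that S by (intro pv_linear_compose[OF pv_linear_cl P] linear_e) auto
  then show ?thesis
    unfolding clifford_sum_eq_sum[abs_def] by (rule pv_linear_sum_op)
qed

lemma scalar_op_clifford_sum_commute:
  assumes S: "S \<subseteq> {1..n}" and Q: "scalar_op Q"
    and PQ: "\<And>i G. i \<in> S \<Longrightarrow> Q (P i G) = P i (Q G)"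
  shows "Q (clifford_sum e S P F) = clifford_sum e S P (Q F)"
  by (simp only: clifford_sum_push[OF S Q]) (simp add: clifford_sum_def PQ)

lemma scalar_op_clifford_sum_anticommute:
  assumes S: "S \<subseteq> {1..n}" and Q: "scalar_op Q"
    and PQ: "\<And>i G. i \<in> S \<Longrightarrow> Q (P i G) = - P i (Q G)"
  shows "Q (clifford_sum e S P F) = - clifford_sum e S P (Q F)"
  unfolding clifford_sum_push[OF S Q] using S
  by (simp add: clifford_sum_def PQ fun_eq_iff subset_iff linear_neg[OF linear_e] sum_negf)

lemma clifford_sum_square:
  assumes S: "S \<subseteq> {1..n}" and P: "\<And>i. scalar_op (P i)"
    and comm: "\<And>i j G. P i (P j G) = P j (P i G)"
  shows "clifford_sum e S P (clifford_sum e S P F) = - (\<Sum>k\<in>S. P k (P k F))"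
proof
  fix a
  have "clifford_sum e S P (clifford_sum e S P F) a
      = (\<Sum>k\<in>S. e k (clifford_sum e S (\<lambda>j G. P k (P j G)) F a))"
    by (simp add: clifford_sum_def[of e S P "clifford_sum e S P F"] clifford_sum_push[OF S P])
  also have "\<dots> = (\<Sum>k\<in>S. \<Sum>j\<in>S. e k (e j (P k (P j F) a)))"
    using S by (simp add: clifford_sum_def e_sum subset_iff)
  also have "\<dots> = - (\<Sum>k\<in>S. P k (P k F) a)"
    by (rule clifford_double_sum_symmetric[OF S]) (simp add: comm)
  finally show "clifford_sum e S P (clifford_sum e S P F) a = (- (\<Sum>k\<in>S. P k (P k F))) a"
    by (simp add: sum_fun_apply)
qed

lemma clifford_sum_anticommute_disjoint:
  assumes S: "S \<subseteq> {1..n}" and B: "B \<subseteq> {1..n}" and disj: "S \<inter> B = {}"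
    and P: "\<And>i. scalar_op (P i)" and Q: "\<And>k. scalar_op (Q k)"
    and comm: "\<And>i k G. i \<in> S \<Longrightarrow> k \<in> B \<Longrightarrow> P i (Q k G) = Q k (P i G)"
  shows "clifford_sum e S P (clifford_sum e B Q F) = - clifford_sum e B Q (clifford_sum e S P F)"
proof
  fix a
  have "clifford_sum e S P (clifford_sum e B Q F) a
      = (\<Sum>i\<in>S. e i (clifford_sum e B (\<lambda>k G. P i (Q k G)) F a))"
    by (simp add: clifford_sum_def[of e S P "clifford_sum e B Q F"] clifford_sum_push[OF B P])
  also have "\<dots> = (\<Sum>i\<in>S. \<Sum>k\<in>B. e i (e k (P i (Q k F) a)))"
    using S by (simp add: clifford_sum_def e_sum subset_iff)
  also have "\<dots> = - (\<Sum>k\<in>B. \<Sum>i\<in>S. e k (e i (P i (Q k F) a)))"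
    by (rule clifford_double_sum_disjoint[OF S B disj])
  also have "\<dots> = - (\<Sum>k\<in>B. e k (clifford_sum e S (\<lambda>i G. Q k (P i G)) F a))"
    using B by (simp add: clifford_sum_def e_sum subset_iff comm cong: sum.cong)
  also have "\<dots> = (- clifford_sum e B Q (clifford_sum e S P F)) a"
    by (simp add: clifford_sum_def[of e B Q "clifford_sum e S P F"] clifford_sum_push[OF S Q])
  finally show "clifford_sum e S P (clifford_sum e B Q F) a = (- clifford_sum e B Q (clifford_sum e S P F)) a" .
qed

lemma clifford_sum_cube:
  assumes S: "S \<subseteq> {1..n}" and P: "\<And>i. scalar_op (P i)" and Q: "\<And>i. scalar_op (Q i)"
    and comm: "\<And>i j G. P i (P j G) = P j (P i G)"
    and commutator: "\<And>i k G. P k (P k (Q i G)) - Q i (P k (P k G)) = (if i = k then pv_scale c (P k G) else 0)"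
  shows "clifford_sum e S Q (clifford_sum e S P (clifford_sum e S P F))
       - clifford_sum e S P (clifford_sum e S P (clifford_sum e S Q F))
       = pv_scale c (clifford_sum e S P F)"
proof
  fix a
  have Q_lin: "pv_linear (clifford_sum e S Q)"
    using Q S by (intro pv_linear_clifford_sum) (auto simp: scalar_op_def)
  have PP: "scalar_op (\<lambda>G. P k (P k G))" for k
    by (rule scalar_op_compose[OF P P])
  have commutator_term: "e i (P k (P k (Q i F)) a) - e i (Q i (P k (P k F)) a)
      = (if i = k then c *\<^sub>R e k (P k F a) else 0)" if "i \<in> S" for i k
  proof -
    have "e i (P k (P k (Q i F)) a) - e i (Q i (P k (P k F)) a)
        = e i ((P k (P k (Q i F)) - Q i (P k (P k F))) a)"
      using that S by (simp add: linear_diff[OF linear_e] subset_iff)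
    then show ?thesis
      using that S by (auto simp: commutator pv_scale_def linear_scale[OF linear_e] linear_0[OF linear_e])
  qed
  have "(clifford_sum e S Q (clifford_sum e S P (clifford_sum e S P F))
       - clifford_sum e S P (clifford_sum e S P (clifford_sum e S Q F))) a
      = (\<Sum>k\<in>S. clifford_sum e S (\<lambda>i G. P k (P k (Q i G))) F a
                 - clifford_sum e S (\<lambda>i G. Q i (P k (P k G))) F a)"
    by (simp add: clifford_sum_square[OF S P comm] pv_linear_neg[OF Q_lin] pv_linear_sum[OF Q_lin]
        clifford_sum_push[OF S PP] sum_fun_apply sum_subtractf)
       (simp add: clifford_sum_def)
  also have "\<dots> = (\<Sum>k\<in>S. \<Sum>i\<in>S. if i = k then c *\<^sub>R e k (P k F a) else 0)"
    by (simp add: clifford_sum_def commutator_term flip: sum_subtractf)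
  also have "\<dots> = pv_scale c (clifford_sum e S P F) a"
    using finite_subset[OF S] by (simp add: clifford_sum_def pv_scale_def scaleR_sum_right)
  finally show "(clifford_sum e S Q (clifford_sum e S P (clifford_sum e S P F))
       - clifford_sum e S P (clifford_sum e S P (clifford_sum e S Q F))) a
       = pv_scale c (clifford_sum e S P F) a" .
qed

lemma pv_linear_DA: "S \<subseteq> {1..n} \<Longrightarrow> pv_linear (DA e mu S)"
  unfolding DA_eq_clifford_sum by (rule pv_linear_clifford_sum) (simp_all add: pv_linear_dunkl)

lemma pv_linear_XA: "S \<subseteq> {1..n} \<Longrightarrow> pv_linear (XA e S)"
  unfolding XA_eq_clifford_sum by (rule pv_linear_clifford_sum) (simp_all add: pv_linear_mulx)

lemma pv_linear_SA: "S \<subseteq> {1..n} \<Longrightarrow> pv_linear (SA e mu S)"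
  unfolding SA_eq_half_commutator by (intro pv_linear_half_commutator pv_linear_XA pv_linear_DA)

lemma XA_DA_DA_commutator:
  "S \<subseteq> {1..n} \<Longrightarrow>
    XA e S (DA e mu S (DA e mu S F)) - DA e mu S (DA e mu S (XA e S F)) = pv_scale 2 (DA e mu S F)"
  unfolding DA_eq_clifford_sum XA_eq_clifford_sum
  by (rule clifford_sum_cube)
     (simp_all add: scalar_op_dunkl scalar_op_mulx dunkl_commute dunkl_sq_mulx_commutator)

lemma DA_XA_XA_commutator:
  "S \<subseteq> {1..n} \<Longrightarrow>
    DA e mu S (XA e S (XA e S F)) - XA e S (XA e S (DA e mu S F)) = pv_scale (-2) (XA e S F)"
  unfolding DA_eq_clifford_sum XA_eq_clifford_sum
  by (rule clifford_sum_cube)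
     (simp_all add: scalar_op_dunkl scalar_op_mulx mulx_commute mulx_sq_dunkl_commutator)

lemma SA_DA_anticommute:
  assumes "S \<subseteq> {1..n}"
  shows "SA e mu S (DA e mu S F) = - DA e mu S (SA e mu S F)"
  unfolding SA_eq_half_commutator
  by (rule half_commutator_anticommute_right[where X = "XA e S",
        OF pv_linear_DA[OF assms] XA_DA_DA_commutator[OF assms]])

lemma SA_XA_anticommute:
  assumes "S \<subseteq> {1..n}"
  shows "SA e mu S (XA e S F) = - XA e S (SA e mu S F)"
  unfolding SA_eq_half_commutator
  by (rule half_commutator_anticommute_left[where D = "DA e mu S",
        OF pv_linear_XA[OF assms] DA_XA_XA_commutator[OF assms]])

lemma SA_DA_commute_disjoint:
  assumes S: "S \<subseteq> {1..n}" and B: "B \<subseteq> {1..n}" and disj: "S \<inter> B = {}"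
  shows "SA e mu S (DA e mu B F) = DA e mu B (SA e mu S F)"
  unfolding SA_eq_half_commutator
proof (rule half_commutator_commute_of_anticommute[symmetric])
  show "DA e mu B (XA e S G) = - XA e S (DA e mu B G)"
    and "DA e mu B (DA e mu S G) = - DA e mu S (DA e mu B G)" for G
    unfolding DA_eq_clifford_sum XA_eq_clifford_sum using disj
    by (auto intro!: clifford_sum_anticommute_disjoint[OF B S] dunkl_mulx_commute
        simp: scalar_op_dunkl scalar_op_mulx dunkl_commute)
qed (intro pv_linear_DA pv_linear_XA S B)+

lemma SA_XA_commute_disjoint:
  assumes S: "S \<subseteq> {1..n}" and B: "B \<subseteq> {1..n}" and disj: "S \<inter> B = {}"
  shows "SA e mu S (XA e B F) = XA e B (SA e mu S F)"
  unfolding SA_eq_half_commutator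
proof (rule half_commutator_commute_of_anticommute[symmetric])
  show "XA e B (XA e S G) = - XA e S (XA e B G)"
    and "XA e B (DA e mu S G) = - DA e mu S (XA e B G)" for G
    unfolding DA_eq_clifford_sum XA_eq_clifford_sum using disj
    by (auto intro!: clifford_sum_anticommute_disjoint[OF B S] dunkl_mulx_commute[symmetric]
        simp: scalar_op_dunkl scalar_op_mulx mulx_commute)
qed (intro pv_linear_DA pv_linear_XA S B)+

lemma reflA_DA_anticommute:
  "S \<subseteq> A \<Longrightarrow> A \<subseteq> {1..n} \<Longrightarrow> reflA A (DA e mu S F) = - DA e mu S (reflA A F)"
  unfolding DA_eq_clifford_sum
  by (rule scalar_op_clifford_sum_anticommute) (auto simp: scalar_op_reflA reflA_dunkl finite_subset)

lemma reflA_DA_commute: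
  "S \<subseteq> {1..n} \<Longrightarrow> finite A \<Longrightarrow> S \<inter> A = {} \<Longrightarrow>
    reflA A (DA e mu S F) = DA e mu S (reflA A F)"
  unfolding DA_eq_clifford_sum
  by (rule scalar_op_clifford_sum_commute) (auto simp: scalar_op_reflA reflA_dunkl)

lemma reflA_XA_anticommute:
  "S \<subseteq> A \<Longrightarrow> A \<subseteq> {1..n} \<Longrightarrow> reflA A (XA e S F) = - XA e S (reflA A F)"
  unfolding XA_eq_clifford_sum
  by (rule scalar_op_clifford_sum_anticommute) (auto simp: scalar_op_reflA reflA_mulx finite_subset)

lemma reflA_XA_commute:
  "S \<subseteq> {1..n} \<Longrightarrow> finite A \<Longrightarrow> S \<inter> A = {} \<Longrightarrow>
    reflA A (XA e S F) = XA e S (reflA A F)"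
  unfolding XA_eq_clifford_sum
  by (rule scalar_op_clifford_sum_commute) (auto simp: scalar_op_reflA reflA_mulx)

lemma reflA_SA_commute:
  assumes "S \<subseteq> A" "A \<subseteq> {1..n}"
  shows "reflA A (SA e mu S F) = SA e mu S (reflA A F)"
  unfolding SA_eq_half_commutator using assms
  by (intro half_commutator_commute_of_anticommute pv_linear_reflA pv_linear_XA pv_linear_DA
      reflA_XA_anticommute reflA_DA_anticommute) auto

lemma pv_linear_GammaA: "A \<subseteq> {1..n} \<Longrightarrow> pv_linear (GammaA e mu A)"
  unfolding GammaA_def[abs_def] by (rule pv_linear_compose[OF pv_linear_SA pv_linear_reflA])

lemma GammaA_DA_commute:
  assumes A: "A \<subseteq> {1..n}"
  shows "GammaA e mu A (DA e mu {1..n} F) = DA e mu {1..n} (GammaA e mu A F)"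
proof -
  define B where "B = {1..n} - A"
  have B: "B \<subseteq> {1..n}" and disj: "A \<inter> B = {}" "B \<inter> A = {}" and fin: "finite A"
    using A finite_subset unfolding B_def by auto
  have "GammaA e mu A (DA e mu A F) = DA e mu A (GammaA e mu A F)"
    unfolding GammaA_def
    by (simp add: reflA_DA_anticommute[OF order_refl A] pv_linear_neg[OF pv_linear_SA[OF A]]
        SA_DA_anticommute[OF A])
  moreover have "GammaA e mu A (DA e mu B F) = DA e mu B (GammaA e mu A F)"
    unfolding GammaA_def
    by (simp add: reflA_DA_commute[OF B fin disj(2)] SA_DA_commute_disjoint[OF A B disj(1)])
  ultimately show ?thesis
    by (simp only: DA_split[OF finite_atLeastAtMost A] pv_linear_add[OF pv_linear_GammaA[OF A]]
        B_def[symmetric])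
qed

lemma GammaA_XA_commute:
  assumes A: "A \<subseteq> {1..n}"
  shows "GammaA e mu A (XA e {1..n} F) = XA e {1..n} (GammaA e mu A F)"
proof -
  define B where "B = {1..n} - A"
  have B: "B \<subseteq> {1..n}" and disj: "A \<inter> B = {}" "B \<inter> A = {}" and fin: "finite A"
    using A finite_subset unfolding B_def by auto
  have "GammaA e mu A (XA e A F) = XA e A (GammaA e mu A F)"
    unfolding GammaA_def
    by (simp add: reflA_XA_anticommute[OF order_refl A] pv_linear_neg[OF pv_linear_SA[OF A]]
        SA_XA_anticommute[OF A])
  moreover have "GammaA e mu A (XA e B F) = XA e B (GammaA e mu A F)"
    unfolding GammaA_def
    by (simp add: reflA_XA_commute[OF B fin disj(2)] SA_XA_commute_disjoint[OF A B disj(1)])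
  ultimately show ?thesis
    by (simp only: XA_split[OF finite_atLeastAtMost A] pv_linear_add[OF pv_linear_GammaA[OF A]]
        B_def[symmetric])
qed

lemma GammaA_GammaA_commute:
  assumes A: "A \<subseteq> {1..n}"
  shows "GammaA e mu A (GammaA e mu {1..n} F) = GammaA e mu {1..n} (GammaA e mu A F)"
proof -
  have reflA_GammaA: "GammaA e mu A (reflA {1..n} G) = reflA {1..n} (GammaA e mu A G)" for G
    unfolding GammaA_def reflA_commute[of A]
    by (rule reflA_SA_commute[OF A order_refl, symmetric])
  have "GammaA e mu A (GammaA e mu {1..n} F) = SA e mu {1..n} (GammaA e mu A (reflA {1..n} F))"
    unfolding GammaA_def[of e mu "{1..n}"] SA_eq_half_commutator
    by (intro half_commutator_commute pv_linear_GammaA A GammaA_XA_commute GammaA_DA_commute)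
  also have "\<dots> = GammaA e mu {1..n} (GammaA e mu A F)"
    by (simp only: reflA_GammaA GammaA_def[of e mu "{1..n}"])
  finally show ?thesis .
qed

end

theorem lemma1:
  fixes n :: nat and mu :: "nat \<Rightarrow> real" and e :: "nat \<Rightarrow> 'v::real_vector \<Rightarrow> 'v"
    and A :: "nat set" and F :: "'v pv"
  assumes "n \<ge> 1"
    and "\<forall>i\<in>{1..n}. mu i > 0"
    and "clifford_module n e"
    and "A \<subseteq> {1..n}"
    and "is_pv n F"
  shows "commut (GammaA e mu A) (DA e mu {1..n}) F = 0
       \<and> commut (GammaA e mu A) (XA e {1..n}) F = 0
       \<and> commut (GammaA e mu A) (GammaA e mu {1..n}) F = 0"
proof -
  interpret clifford n e by unfold_locales (rule assms(3))
  show ?thesis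
    using GammaA_DA_commute[OF assms(4), of mu F] GammaA_XA_commute[OF assms(4), of mu F]
      GammaA_GammaA_commute[OF assms(4), of mu F]
    by (simp add: commut_def fun_eq_iff)
qed

end
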